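(* For every integer $s\ge 0$ there exists a potential $W\in\mathcal{W}_{2s+1}$ such that $C(W)\ge 2s$.
   Context: $\mathcal{W}$ is the set of even functions $W\in C^2(\mathbb{R})$ for which there is some $m>0$ with $W'(\pm m)=0$, $W'(x)>0$ for $x\in(-m,0)\cup(m,\infty)$, $W'(x)<0$ for $x\in(-\infty,-m)\cup(0,m)$, and $\lim_{x\to\pm\infty}W(x)/x^2=\infty$. $\mathcal{W}_s\subseteq\mathcal{W}$ consists of those $W$ having exactly $s$ inflection points in the interval between $x=0$ and $x=m$. For a weighted graph $G$ on vertices $\{1,\dots,n\}$ with symmetric real weights $\gamma_{ij}=\gamma_{ji}$ (possibly negative), and $\kappa\ge0$, let $E_{W,G,\kappa}(x)=\sum_{i=1}^nW(x_i)+\frac{\kappa}{2}\sum_{i,j=1}^n\gamma_{ij}(x_i-x_j)^2$ on $\mathbb{R}^n$, and let $m(W,G,\kappa)$ be the number of local minima of $E_{W,G,\kappa}$. Define $C(G,W)=\sup_{\kappa\ge0}\{m(W,G,\kappa)-m(W,G,0)\}$ and $C(W)=\inf_{G\in\mathcal{G}}C(G,W)$, where $\mathcal{G}$ is the set of all connected weighted graphs (connected meaning the graph of pairs $\{i,j\}$ with $\gamma_{ij}\ne0$ is connected) with at least two vertices, over all numbers of vertices $n$. *)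

theory Defs
  imports "HOL-Analysis.Analysis"
begin

definition C2 :: "(real \<Rightarrow> real) \<Rightarrow> bool" where
  "C2 W \<longleftrightarrow> (\<forall>x. W differentiable (at x)) \<and> (\<forall>x. deriv W differentiable (at x))
      \<and> continuous_on UNIV (deriv (deriv W))"

definition inflection_point :: "(real \<Rightarrow> real) \<Rightarrow> real \<Rightarrow> bool" where
  "inflection_point W x \<longleftrightarrow> (\<exists>d>0.
     ((\<forall>y\<in>{x-d<..<x}. deriv (deriv W) y > 0) \<and> (\<forall>y\<in>{x<..<x+d}. deriv (deriv W) y < 0)) \<or>
     ((\<forall>y\<in>{x-d<..<x}. deriv (deriv W) y < 0) \<and> (\<forall>y\<in>{x<..<x+d}. deriv (deriv W) y > 0)))"

definition well_potential_at :: "(real \<Rightarrow> real) \<Rightarrow> real \<Rightarrow> bool" where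
  "well_potential_at W m \<longleftrightarrow> m > 0 \<and> C2 W \<and> (\<forall>x. W (-x) = W x) \<and>
     deriv W m = 0 \<and> deriv W (-m) = 0 \<and>
     (\<forall>x. (x \<in> {-m<..<0} \<or> x > m) \<longrightarrow> deriv W x > 0) \<and>
     (\<forall>x. (x < -m \<or> x \<in> {0<..<m}) \<longrightarrow> deriv W x < 0) \<and>
     filterlim (\<lambda>x. W x / x^2) at_top at_top \<and>
     filterlim (\<lambda>x. W x / x^2) at_top at_bot"

definition Wclass :: "(real \<Rightarrow> real) set" where
  "Wclass = {W. \<exists>m. well_potential_at W m}"

definition Wclass_s :: "nat \<Rightarrow> (real \<Rightarrow> real) set" where
  "Wclass_s s = {W. \<exists>m. well_potential_at W m \<and>
       finite {x\<in>{0<..<m}. inflection_point W x} \<and>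
       card {x\<in>{0<..<m}. inflection_point W x} = s}"

text \<open>Graphs on vertices {1..n}, weights gamma (only values on {1..n} matter).
  Points of R^n are functions nat => real vanishing outside {1..n}.\<close>
definition pts :: "nat \<Rightarrow> (nat \<Rightarrow> real) set" where
  "pts n = {x. \<forall>i. i \<notin> {1..n} \<longrightarrow> x i = 0}"

definition energy :: "(real \<Rightarrow> real) \<Rightarrow> nat \<Rightarrow> (nat \<Rightarrow> nat \<Rightarrow> real) \<Rightarrow> real \<Rightarrow> (nat \<Rightarrow> real) \<Rightarrow> real" where
  "energy W n \<gamma> \<kappa> x = (\<Sum>i=1..n. W (x i)) +
     \<kappa> / 2 * (\<Sum>i=1..n. \<Sum>j=1..n. \<gamma> i j * (x i - x j)^2)"

definition is_local_min :: "nat \<Rightarrow> ((nat \<Rightarrow> real) \<Rightarrow> real) \<Rightarrow> (nat \<Rightarrow> real) \<Rightarrow> bool" where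
  "is_local_min n E x \<longleftrightarrow> x \<in> pts n \<and> (\<exists>e>0. \<forall>y\<in>pts n.
      (\<forall>i\<in>{1..n}. \<bar>y i - x i\<bar> < e) \<longrightarrow> E x \<le> E y)"

definition num_min :: "(real \<Rightarrow> real) \<Rightarrow> nat \<Rightarrow> (nat \<Rightarrow> nat \<Rightarrow> real) \<Rightarrow> real \<Rightarrow> ereal" where
  "num_min W n \<gamma> \<kappa> = (let S = {x. is_local_min n (energy W n \<gamma> \<kappa>) x} in
      if finite S then ereal (real (card S)) else \<infinity>)"

definition connected_weighted :: "nat \<Rightarrow> (nat \<Rightarrow> nat \<Rightarrow> real) \<Rightarrow> bool" where
  "connected_weighted n \<gamma> \<longleftrightarrow> (\<forall>i\<in>{1..n}. \<forall>j\<in>{1..n}.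
      (i, j) \<in> {(a, b). a \<in> {1..n} \<and> b \<in> {1..n} \<and> a \<noteq> b \<and> \<gamma> a b \<noteq> 0}\<^sup>*)"

definition graphs :: "(nat \<times> (nat \<Rightarrow> nat \<Rightarrow> real)) set" where
  "graphs = {(n, \<gamma>). n \<ge> 2 \<and> (\<forall>i\<in>{1..n}. \<forall>j\<in>{1..n}. \<gamma> i j = \<gamma> j i) \<and> connected_weighted n \<gamma>}"

definition C_graph :: "nat \<Rightarrow> (nat \<Rightarrow> nat \<Rightarrow> real) \<Rightarrow> (real \<Rightarrow> real) \<Rightarrow> ereal" where
  "C_graph n \<gamma> W = (SUP \<kappa>\<in>{0..}. num_min W n \<gamma> \<kappa> - num_min W n \<gamma> 0)"

definition C_pot :: "(real \<Rightarrow> real) \<Rightarrow> ereal" where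
  "C_pot W = (INF g\<in>graphs. C_graph (fst g) (snd g) W)"

end

theory Submission
  imports Defs "HOL-Real_Asymp.Real_Asymp"
begin

(*
  The potential is built from its second derivative. On [-x0, x0] it is -pi sin(2 pi x) - eta,
  where the shift eta = pi sin(2 pi alpha) moves its zeros to k - alpha and j + 1/2 + alpha, giving
  exactly 2s+1 sign changes in (0, x0); beyond x0 it grows linearly, so that the first derivative
  -sin(pi x)^2 - eta x stays negative up to the single well m = x0 + 1.

  At coupling 0 a local minimum has every coordinate at a well, so there are at most 2^n of them.
  For a connected graph with maximal weighted degree Gamma take kappa = tau / Gamma with tau small.
  Near +-m the slope of the potential dominates the coupling force, so each of the 2^n sign patterns
  still carries a local minimum. Moreover, place the neighbours of a vertex v of maximal degree in
  the wells that push x_v towards the origin: for k = 1..s this force balances the tiny slope just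
  below the inflection point k - alpha, and traps x_v between k - 1/2 and k - alpha. These s
  minima and their mirror images are the 2s new ones.
*)

section \<open>Primitives of continuous functions\<close>

definition primitive :: "(real \<Rightarrow> real) \<Rightarrow> real \<Rightarrow> real" where
  "primitive f = (SOME F. F 0 = 0 \<and> (\<forall>x. (F has_real_derivative f x) (at x)))"

lemma primitive_exists:
  assumes "continuous_on UNIV f"
  shows "\<exists>F. F 0 = 0 \<and> (\<forall>x. (F has_real_derivative f x) (at x))"
proof -
  obtain G where G: "\<And>x. (G has_vector_derivative f x) (at x)"
    using einterval_antiderivative[of "-\<infinity>" "\<infinity>" f] assms
    by (auto simp: continuous_on_eq_continuous_at)
  then have "\<forall>x. ((\<lambda>x. G x - G 0) has_real_derivative f x) (at x)"
    by (auto simp: has_real_derivative_iff_has_vector_derivative intro!: derivative_eq_intros)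
  then show ?thesis by (intro exI[of _ "\<lambda>x. G x - G 0"]) simp
qed

context
  fixes f :: "real \<Rightarrow> real"
  assumes cont: "continuous_on UNIV f"
begin

lemma primitive_0: "primitive f 0 = 0"
  and has_real_derivative_primitive: "(primitive f has_real_derivative f x) (at x)"
  using someI_ex[OF primitive_exists[OF cont]] unfolding primitive_def by blast+

lemma deriv_primitive: "deriv (primitive f) = f"
  using has_real_derivative_primitive DERIV_imp_deriv by blast

lemma continuous_on_primitive: "continuous_on UNIV (primitive f)"
  using has_real_derivative_primitive DERIV_isCont continuous_at_imp_continuous_on by blast

lemma primitive_eq_antiderivative:
  assumes "a \<le> b" and G: "\<And>x. x \<in> {a..b} \<Longrightarrow> (G has_real_derivative f x) (at x)"
  shows "primitive f b = primitive f a + (G b - G a)"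
proof (cases "a = b")
  case False
  have D: "((\<lambda>x. primitive f x - G x) has_real_derivative 0) (at x)" if "x \<in> {a..b}" for x
    using DERIV_diff[OF has_real_derivative_primitive G[OF that]] by simp
  have "continuous_on {a..b} (\<lambda>x. primitive f x - G x)"
    using D DERIV_isCont continuous_at_imp_continuous_on by blast
  then have "primitive f b - G b = primitive f a - G a"
    by (rule DERIV_isconst_end[rotated]) (use False assms(1) D in auto)
  then show ?thesis by simp
qed simp

lemma primitive_odd_if_even:
  assumes "\<And>x. f (- x) = f x"
  shows "primitive f (- x) = - primitive f x"
proof -
  have "((\<lambda>y. primitive f y + primitive f (- y)) has_real_derivative 0) (at y)" for y
    using DERIV_add[OF has_real_derivative_primitive
        DERIV_chain2[OF has_real_derivative_primitive DERIV_minus[OF DERIV_ident]]]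
    by (simp add: assms)
  from DERIV_isconst_all[OF allI[OF this], of x 0] show ?thesis by (simp add: primitive_0)
qed

lemma primitive_even_if_odd:
  assumes "\<And>x. f (- x) = - f x"
  shows "primitive f (- x) = primitive f x"
proof -
  have "((\<lambda>y. primitive f y - primitive f (- y)) has_real_derivative 0) (at y)" for y
    using DERIV_diff[OF has_real_derivative_primitive
        DERIV_chain2[OF has_real_derivative_primitive DERIV_minus[OF DERIV_ident]]]
    by (simp add: assms)
  from DERIV_isconst_all[OF allI[OF this], of x 0] show ?thesis by (simp add: primitive_0)
qed

end

section \<open>The energy and its partial derivatives\<close>

definition coupling_force :: "nat \<Rightarrow> (nat \<Rightarrow> nat \<Rightarrow> real) \<Rightarrow> real \<Rightarrow> (nat \<Rightarrow> real) \<Rightarrow> nat \<Rightarrow> real" where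
  "coupling_force n \<gamma> \<kappa> y i = 2 * \<kappa> * (\<Sum>j=1..n. \<gamma> i j * (y i - y j))"

definition weighted_degree :: "nat \<Rightarrow> (nat \<Rightarrow> nat \<Rightarrow> real) \<Rightarrow> nat \<Rightarrow> real" where
  "weighted_degree n \<gamma> i = (\<Sum>j\<in>{1..n} - {i}. \<bar>\<gamma> i j\<bar>)"

lemma sum_sum_mult_indicator_diff:
  fixes g :: "'a \<Rightarrow> 'a \<Rightarrow> real"
  assumes "i \<in> A" "finite A"
  shows "(\<Sum>a\<in>A. \<Sum>b\<in>A. g a b * ((if a = i then 1 else 0) - (if b = i then 1 else 0)))
       = (\<Sum>b\<in>A. g i b) - (\<Sum>a\<in>A. g a i)"
proof -
  have "g a b * ((if a = i then 1 else 0) - (if b = i then 1 else 0))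
      = (if a = i then g a b else 0) - (if b = i then g a b else 0)" for a b
    by auto
  then have "(\<Sum>a\<in>A. \<Sum>b\<in>A. g a b * ((if a = i then 1 else 0) - (if b = i then 1 else 0)))
      = (\<Sum>a\<in>A. \<Sum>b\<in>A. if a = i then g a b else 0) - (\<Sum>a\<in>A. \<Sum>b\<in>A. if b = i then g a b else 0)"
    by (simp add: sum_subtractf)
  also have "(\<Sum>a\<in>A. \<Sum>b\<in>A. if a = i then g a b else 0) = (\<Sum>b\<in>A. g i b)"
  proof -
    have "(\<Sum>b\<in>A. if a = i then g a b else 0) = (if a = i then \<Sum>b\<in>A. g a b else 0)" for a
      by simp
    then show ?thesis using assms by (simp add: sum.delta')
  qed
  also have "(\<Sum>a\<in>A. \<Sum>b\<in>A. if b = i then g a b else 0) = (\<Sum>a\<in>A. g a i)"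
    using assms by (simp add: sum.delta')
  finally show ?thesis .
qed

lemma energy_partial_derivative:
  assumes sym: "\<forall>a\<in>{1..n}. \<forall>b\<in>{1..n}. \<gamma> a b = \<gamma> b a"
    and i: "i \<in> {1..n}"
    and W: "(W has_real_derivative w) (at t)"
  shows "((\<lambda>t. energy W n \<gamma> \<kappa> (x(i:=t))) has_real_derivative
            w + coupling_force n \<gamma> \<kappa> (x(i:=t)) i) (at t)"
proof -
  define y where "y t = x(i:=t)" for t
  define d where "d b = (if b = i then 1 else (0::real))" for b
  have dy: "((\<lambda>t. y t b) has_real_derivative d b) (at t)" for b
    unfolding y_def d_def by (cases "b = i") auto
  have dW: "((\<lambda>t. W (y t b)) has_real_derivative (if b = i then w else 0)) (at t)" for b
    unfolding y_def by (cases "b = i") (auto simp: W)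
  have dsq: "((\<lambda>t. \<gamma> a b * (y t a - y t b)\<^sup>2) has_real_derivative
        2 * \<gamma> a b * (y t a - y t b) * (d a - d b)) (at t)" for a b
    by (rule derivative_eq_intros dy refl | simp)+
  have D: "((\<lambda>t. energy W n \<gamma> \<kappa> (y t)) has_real_derivative
      (\<Sum>b=1..n. if b = i then w else 0) +
      \<kappa> / 2 * (\<Sum>a=1..n. \<Sum>b=1..n. 2 * \<gamma> a b * (y t a - y t b) * (d a - d b))) (at t)"
    unfolding energy_def by (intro DERIV_add DERIV_cmult DERIV_sum dW dsq)
  have "(\<Sum>a=1..n. \<Sum>b=1..n. 2 * \<gamma> a b * (y t a - y t b) * (d a - d b))
      = (\<Sum>b=1..n. 2 * \<gamma> i b * (y t i - y t b)) - (\<Sum>a=1..n. 2 * \<gamma> a i * (y t a - y t i))"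
    unfolding d_def by (rule sum_sum_mult_indicator_diff) (use i in auto)
  also have "(\<Sum>a=1..n. 2 * \<gamma> a i * (y t a - y t i)) = - (\<Sum>a=1..n. 2 * \<gamma> i a * (y t i - y t a))"
    by (subst sum_negf[symmetric], rule sum.cong) (use sym i in \<open>auto simp: algebra_simps\<close>)
  finally have "(\<Sum>a=1..n. \<Sum>b=1..n. 2 * \<gamma> a b * (y t a - y t b) * (d a - d b))
      = 4 * (\<Sum>b=1..n. \<gamma> i b * (y t i - y t b))"
    by (simp add: sum_distrib_left mult.assoc)
  with D i show ?thesis
    unfolding y_def coupling_force_def by (simp add: mult.assoc)
qed

lemma continuous_on_energy:
  assumes "continuous_on UNIV W"
  shows "continuous_on UNIV (energy W n \<gamma> \<kappa>)"
proof -
  have "continuous_on UNIV (\<lambda>x::nat\<Rightarrow>real. W (x i))" for i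
    by (rule continuous_on_compose2[OF assms]) auto
  then show ?thesis unfolding energy_def by (intro continuous_intros) auto
qed

lemma abs_coupling_force_le:
  assumes i: "i \<in> {1..n}" and M: "\<forall>j\<in>{1..n}. \<bar>y j\<bar> \<le> M" and "0 \<le> \<kappa>"
  shows "\<bar>coupling_force n \<gamma> \<kappa> y i\<bar> \<le> 4 * \<kappa> * M * weighted_degree n \<gamma> i"
proof -
  have "(\<Sum>j=1..n. \<gamma> i j * (y i - y j)) = (\<Sum>j\<in>{1..n} - {i}. \<gamma> i j * (y i - y j))"
    using i by (subst sum.remove[of _ i]) auto
  also have "\<bar>\<dots>\<bar> \<le> (\<Sum>j\<in>{1..n} - {i}. \<bar>\<gamma> i j * (y i - y j)\<bar>)"
    by (rule sum_abs)
  also have "\<dots> \<le> (\<Sum>j\<in>{1..n} - {i}. 2 * M * \<bar>\<gamma> i j\<bar>)"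
  proof (rule sum_mono)
    fix j assume "j \<in> {1..n} - {i}"
    then have "\<bar>y i\<bar> \<le> M" "\<bar>y j\<bar> \<le> M" using M i by auto
    then have "\<bar>y i - y j\<bar> \<le> 2 * M" by linarith
    then show "\<bar>\<gamma> i j * (y i - y j)\<bar> \<le> 2 * M * \<bar>\<gamma> i j\<bar>"
      by (simp add: abs_mult mult_left_mono mult.commute)
  qed
  also have "\<dots> = 2 * M * weighted_degree n \<gamma> i"
    unfolding weighted_degree_def by (rule sum_distrib_left[symmetric])
  finally have "2 * \<kappa> * \<bar>\<Sum>j=1..n. \<gamma> i j * (y i - y j)\<bar> \<le> 2 * \<kappa> * (2 * M * weighted_degree n \<gamma> i)"
    using assms(3) by (intro mult_left_mono) auto
  then show ?thesis
    unfolding coupling_force_def using assms(3) by (simp add: abs_mult)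
qed

lemma energy_minus:
  assumes "\<And>t. W (- t) = W t"
  shows "energy W n \<gamma> \<kappa> (\<lambda>i. - x i) = energy W n \<gamma> \<kappa> x"
  unfolding energy_def using assms by (simp add: power2_commute algebra_simps)

lemma is_local_min_energy_minus:
  assumes "\<And>t. W (- t) = W t" and "is_local_min n (energy W n \<gamma> \<kappa>) x"
  shows "is_local_min n (energy W n \<gamma> \<kappa>) (\<lambda>i. - x i)"
proof -
  obtain e where "e > 0" and x: "x \<in> pts n" and e: "\<forall>y\<in>pts n. (\<forall>i\<in>{1..n}. \<bar>y i - x i\<bar> < e) \<longrightarrow>
      energy W n \<gamma> \<kappa> x \<le> energy W n \<gamma> \<kappa> y"
    using assms(2) unfolding is_local_min_def by blast
  have "energy W n \<gamma> \<kappa> (\<lambda>i. - x i) \<le> energy W n \<gamma> \<kappa> y"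
    if "y \<in> pts n" "\<forall>i\<in>{1..n}. \<bar>y i + x i\<bar> < e" for y
  proof -
    have "(\<lambda>i. - y i) \<in> pts n" using that(1) unfolding pts_def by auto
    moreover have "\<forall>i\<in>{1..n}. \<bar>- y i - x i\<bar> < e"
      using that(2) by (simp add: abs_minus_commute add.commute)
    ultimately show ?thesis
      using e energy_minus[of W n \<gamma> \<kappa>, OF assms(1)] by metis
  qed
  moreover have "(\<lambda>i. - x i) \<in> pts n" using x unfolding pts_def by auto
  ultimately show ?thesis unfolding is_local_min_def using \<open>e > 0\<close> by auto
qed

section \<open>Local minima of the energy\<close>

definition coord_box :: "nat \<Rightarrow> (nat \<Rightarrow> real) \<Rightarrow> (nat \<Rightarrow> real) \<Rightarrow> (nat \<Rightarrow> real) set" where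
  "coord_box n lo hi = {x \<in> pts n. \<forall>i\<in>{1..n}. lo i \<le> x i \<and> x i \<le> hi i}"

lemma compact_coord_box:
  assumes "\<forall>i\<in>{1..n}. lo i \<le> hi i"
  shows "compact (coord_box n lo hi)"
proof -
  define S where "S i = (if i \<in> {1..n} then {lo i..hi i} else {0::real})" for i
  have "coord_box n lo hi = PiE UNIV S"
    unfolding coord_box_def pts_def S_def PiE_def Pi_def extensional_def by (auto split: if_splits)
  moreover have "compactin (product_topology (\<lambda>i. euclidean) UNIV) (PiE UNIV S)"
    unfolding compactin_PiE S_def by auto
  ultimately show ?thesis unfolding euclidean_product_topology by simp
qed

lemma abs_le_of_coord_box:
  assumes "x \<in> coord_box n lo hi" "\<forall>j\<in>{1..n}. - M \<le> lo j \<and> hi j \<le> M"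
  shows "\<forall>j\<in>{1..n}. \<bar>x j\<bar> \<le> M"
  using assms unfolding coord_box_def by force

lemma is_local_min_in_box:
  fixes f :: "(nat \<Rightarrow> real) \<Rightarrow> real"
  assumes "1 \<le> n"
    and lohi: "\<forall>i\<in>{1..n}. lo i < hi i"
    and cont: "continuous_on UNIV f"
    and faces: "\<And>x i. x \<in> coord_box n lo hi \<Longrightarrow> i \<in> {1..n} \<Longrightarrow> x i = lo i \<or> x i = hi i \<Longrightarrow>
                 \<exists>t. lo i < t \<and> t < hi i \<and> f (x(i:=t)) < f x"
  obtains P where "is_local_min n f P" "\<forall>i\<in>{1..n}. lo i < P i \<and> P i < hi i"
proof -
  let ?B = "coord_box n lo hi"
  have "(\<lambda>i. if i \<in> {1..n} then lo i else 0) \<in> ?B"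
    unfolding coord_box_def pts_def using lohi by auto
  moreover have "compact ?B" by (rule compact_coord_box) (use lohi in auto)
  ultimately obtain P where P: "P \<in> ?B" "\<forall>y\<in>?B. f P \<le> f y"
    using continuous_attains_inf[OF _ _ continuous_on_subset[OF cont]] by blast
  have interior: "lo i < P i \<and> P i < hi i" if i: "i \<in> {1..n}" for i
  proof (rule ccontr)
    assume "\<not> (lo i < P i \<and> P i < hi i)"
    then have "P i = lo i \<or> P i = hi i" using P(1) i unfolding coord_box_def by force
    then obtain t where t: "lo i < t" "t < hi i" "f (P(i:=t)) < f P"
      using faces[OF P(1) i] by blast
    have "P(i:=t) \<in> ?B" using P(1) t i unfolding coord_box_def pts_def by auto
    then show False using P(2) t by force
  qed
  define e where "e = Min ((\<lambda>i. min (P i - lo i) (hi i - P i)) ` {1..n})"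
  have "0 < e" unfolding e_def using interior assms(1) by (subst Min_gr_iff) auto
  have e_le: "e \<le> min (P i - lo i) (hi i - P i)" if "i \<in> {1..n}" for i
    unfolding e_def using that by (intro Min_le) auto
  have "f P \<le> f y" if "y \<in> pts n" "\<forall>i\<in>{1..n}. \<bar>y i - P i\<bar> < e" for y
  proof -
    have "y \<in> ?B" unfolding coord_box_def using that e_le by force
    then show ?thesis using P(2) by blast
  qed
  then have "is_local_min n f P"
    unfolding is_local_min_def using P(1) \<open>0 < e\<close> unfolding coord_box_def by blast
  then show ?thesis using that interior by blast
qed

lemma DERIV_neg_imp_decreasing_right:
  assumes "(g has_real_derivative D) (at a)" "D < 0" "a < b"
  shows "\<exists>t. a < t \<and> t < b \<and> g t < g a"
proof -
  obtain d where d: "d > 0" "\<forall>h>0. h < d \<longrightarrow> g a > g (a + h)"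
    using DERIV_neg_dec_right[OF assms(1,2)] by blast
  define h where "h = min d (b - a) / 2"
  have "0 < h" "h < d" "h < b - a" unfolding h_def using d assms(3) by auto
  then show ?thesis using d(2) by (intro exI[of _ "a + h"]) auto
qed

lemma DERIV_pos_imp_decreasing_left:
  assumes "(g has_real_derivative D) (at b)" "D > 0" "a < b"
  shows "\<exists>t. a < t \<and> t < b \<and> g t < g b"
proof -
  obtain d where d: "d > 0" "\<forall>h>0. h < d \<longrightarrow> g (b - h) < g b"
    using DERIV_pos_inc_left[OF assms(1,2)] by blast
  define h where "h = min d (b - a) / 2"
  have "0 < h" "h < d" "h < b - a" unfolding h_def using d assms(3) by auto
  then show ?thesis using d(2) by (intro exI[of _ "b - h"]) auto
qed

lemma well_potential_at_has_real_derivative: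
  "well_potential_at W m \<Longrightarrow> (W has_real_derivative deriv W x) (at x)"
  unfolding well_potential_at_def C2_def by (simp add: DERIV_deriv_iff_real_differentiable)

lemma well_potential_local_min:
  assumes W: "well_potential_at W m" and "0 < e" and min: "\<And>t. \<bar>t - x\<bar> < e \<Longrightarrow> W x \<le> W t"
  shows "x = m \<or> x = - m"
proof (rule ccontr)
  assume x: "\<not> (x = m \<or> x = - m)"
  have "deriv W x = 0"
    by (rule DERIV_local_min[OF well_potential_at_has_real_derivative[OF W] \<open>0 < e\<close>])
      (use min in \<open>auto simp: abs_minus_commute\<close>)
  then have "x = 0"
    using W x unfolding well_potential_at_def by (metis greaterThanLessThan_iff less_irrefl linorder_neqE)
  \<comment> \<open>but \<open>0\<close> is no local minimum, as \<open>W\<close> decreases on \<open>(0, m)\<close>\<close>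
  define h where "h = min e m / 2"
  have h: "0 < h" "h < e" "h < m"
    unfolding h_def using \<open>0 < e\<close> W unfolding well_potential_at_def by auto
  obtain z where z: "0 < z" "z < h" "W h - W 0 = (h - 0) * deriv W z"
    using MVT2[OF h(1) well_potential_at_has_real_derivative[OF W]] by blast
  have "deriv W z < 0" using W z h unfolding well_potential_at_def by auto
  then have "W h < W 0" using z(3) h(1) mult_pos_neg[of h] by fastforce
  then show False using min[of h] h \<open>x = 0\<close> by simp
qed

definition sign_pattern :: "nat set \<Rightarrow> nat \<Rightarrow> real" where
  "sign_pattern A i = (if i \<in> A then 1 else -1)"

lemma is_local_min_uncoupled:
  assumes W: "well_potential_at W m" and lm: "is_local_min n (energy W n \<gamma> 0) x"
  shows "x = (\<lambda>i. if i \<in> {1..n} then sign_pattern {i\<in>{1..n}. x i = m} i * m else 0)"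
proof
  fix i
  obtain e where "e > 0" and x: "x \<in> pts n" and e: "\<forall>y\<in>pts n. (\<forall>j\<in>{1..n}. \<bar>y j - x j\<bar> < e) \<longrightarrow>
      energy W n \<gamma> 0 x \<le> energy W n \<gamma> 0 y"
    using lm unfolding is_local_min_def by blast
  show "x i = (if i \<in> {1..n} then sign_pattern {i\<in>{1..n}. x i = m} i * m else 0)"
  proof (cases "i \<in> {1..n}")
    case i: True
    have split: "energy W n \<gamma> 0 (x(i:=t)) = W t + (\<Sum>b\<in>{1..n} - {i}. W (x b))" for t
    proof -
      have "(\<Sum>b\<in>{1..n} - {i}. W ((x(i:=t)) b)) = (\<Sum>b\<in>{1..n} - {i}. W (x b))"
        by (rule sum.cong) auto
      then show ?thesis unfolding energy_def using i by (simp add: sum.remove[of _ i])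
    qed
    have "W (x i) \<le> W t" if "\<bar>t - x i\<bar> < e" for t
    proof -
      have "x(i:=t) \<in> pts n" using x i unfolding pts_def by auto
      then have "energy W n \<gamma> 0 x \<le> energy W n \<gamma> 0 (x(i:=t))"
        using e that \<open>e > 0\<close> by auto
      then show ?thesis using split[of t] split[of "x i"] by simp
    qed
    then have "x i = m \<or> x i = - m" by (rule well_potential_local_min[OF W \<open>e > 0\<close>])
    then show ?thesis
      using i W unfolding sign_pattern_def well_potential_at_def by auto
  qed (use x in \<open>auto simp: pts_def\<close>)
qed

lemma card_local_min_uncoupled:
  assumes "well_potential_at W m"
  shows "finite {x. is_local_min n (energy W n \<gamma> 0) x}"
    and "card {x. is_local_min n (energy W n \<gamma> 0) x} \<le> 2 ^ n"
proof -
  let ?T = "(\<lambda>A i. if i \<in> {1..n} then sign_pattern A i * m else 0) ` Pow {1..n}"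
  have sub: "{x. is_local_min n (energy W n \<gamma> 0) x} \<subseteq> ?T"
    using is_local_min_uncoupled[OF assms] by (auto intro!: image_eqI)
  then show "finite {x. is_local_min n (energy W n \<gamma> 0) x}"
    by (rule finite_subset) simp
  have "card ?T \<le> 2 ^ n"
    using card_image_le[of "Pow {1..n}"] by (simp add: card_Pow)
  then show "card {x. is_local_min n (energy W n \<gamma> 0) x} \<le> 2 ^ n"
    using card_mono[OF _ sub] by simp
qed

definition max_weighted_degree :: "nat \<Rightarrow> (nat \<Rightarrow> nat \<Rightarrow> real) \<Rightarrow> real" where
  "max_weighted_degree n \<gamma> = Max (weighted_degree n \<gamma> ` {1..n})"

definition max_degree_vertex :: "nat \<Rightarrow> (nat \<Rightarrow> nat \<Rightarrow> real) \<Rightarrow> nat" where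
  "max_degree_vertex n \<gamma> = (SOME v. v \<in> {1..n} \<and> weighted_degree n \<gamma> v = max_weighted_degree n \<gamma>)"

lemma weighted_degree_le_max:
  "i \<in> {1..n} \<Longrightarrow> weighted_degree n \<gamma> i \<le> max_weighted_degree n \<gamma>"
  unfolding max_weighted_degree_def by (rule Max_ge) auto

lemma max_degree_vertex:
  assumes "1 \<le> n"
  shows "max_degree_vertex n \<gamma> \<in> {1..n}"
    and "weighted_degree n \<gamma> (max_degree_vertex n \<gamma>) = max_weighted_degree n \<gamma>"
proof -
  have "max_weighted_degree n \<gamma> \<in> weighted_degree n \<gamma> ` {1..n}"
    unfolding max_weighted_degree_def by (rule Max_in) (use assms in auto)
  then have "\<exists>v. v \<in> {1..n} \<and> weighted_degree n \<gamma> v = max_weighted_degree n \<gamma>" by auto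
  from someI_ex[OF this] show "max_degree_vertex n \<gamma> \<in> {1..n}"
    and "weighted_degree n \<gamma> (max_degree_vertex n \<gamma>) = max_weighted_degree n \<gamma>"
    unfolding max_degree_vertex_def by auto
qed

lemma max_weighted_degree_pos:
  assumes "connected_weighted n \<gamma>" "2 \<le> n"
  shows "0 < max_weighted_degree n \<gamma>"
proof -
  define E where "E = {(a, b). a \<in> {1..n} \<and> b \<in> {1..n} \<and> a \<noteq> b \<and> \<gamma> a b \<noteq> 0}"
  have "(1, 2) \<in> E\<^sup>*" using assms unfolding connected_weighted_def E_def by auto
  then obtain c where "(1, c) \<in> E"
    by (cases rule: converse_rtranclE) auto
  then have c: "c \<in> {1..n} - {1}" "\<gamma> 1 c \<noteq> 0" unfolding E_def by auto
  have "0 < \<bar>\<gamma> 1 c\<bar>" using c by simp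
  also have "\<dots> \<le> weighted_degree n \<gamma> 1" unfolding weighted_degree_def
    by (rule member_le_sum[OF c(1)]) auto
  also have "\<dots> \<le> max_weighted_degree n \<gamma>"
    by (rule weighted_degree_le_max) (use assms in auto)
  finally show ?thesis .
qed

lemma coupling_sum_ge_weighted_degree:
  assumes v: "v \<in> {1..n}" and "0 \<le> L"
    and side: "\<And>j. j \<in> {1..n} - {v} \<Longrightarrow>
      (\<gamma> v j > 0 \<longrightarrow> L \<le> x v - x j) \<and> (\<gamma> v j \<le> 0 \<longrightarrow> x v - x j \<le> - L)"
  shows "L * weighted_degree n \<gamma> v \<le> (\<Sum>j=1..n. \<gamma> v j * (x v - x j))"
proof -
  have "L * weighted_degree n \<gamma> v = (\<Sum>j\<in>{1..n} - {v}. L * \<bar>\<gamma> v j\<bar>)"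
    unfolding weighted_degree_def by (simp add: sum_distrib_left)
  also have "\<dots> \<le> (\<Sum>j\<in>{1..n} - {v}. \<gamma> v j * (x v - x j))"
  proof (rule sum_mono)
    fix j assume j: "j \<in> {1..n} - {v}"
    show "L * \<bar>\<gamma> v j\<bar> \<le> \<gamma> v j * (x v - x j)"
    proof (cases "\<gamma> v j > 0")
      case True
      then show ?thesis using side[OF j] mult_left_mono[of L "x v - x j" "\<gamma> v j"] by (simp add: mult.commute)
    next
      case False
      then have "\<gamma> v j * (- L) \<le> \<gamma> v j * (x v - x j)"
        using side[OF j] by (intro mult_left_mono_neg) auto
      then show ?thesis using False by (simp add: mult.commute)
    qed
  qed
  also have "\<dots> = (\<Sum>j=1..n. \<gamma> v j * (x v - x j))"
    using v by (subst (2) sum.remove[of _ v]) auto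
  finally show ?thesis .
qed

lemma energy_decreases_inward:
  assumes sym: "\<forall>a\<in>{1..n}. \<forall>b\<in>{1..n}. \<gamma> a b = \<gamma> b a" and i: "i \<in> {1..n}"
    and W: "(W has_real_derivative w) (at (x i))" and "lo < hi"
  shows "x i = lo \<Longrightarrow> w + coupling_force n \<gamma> \<kappa> x i < 0 \<Longrightarrow>
      \<exists>t. lo < t \<and> t < hi \<and> energy W n \<gamma> \<kappa> (x(i:=t)) < energy W n \<gamma> \<kappa> x"
    and "x i = hi \<Longrightarrow> w + coupling_force n \<gamma> \<kappa> x i > 0 \<Longrightarrow>
      \<exists>t. lo < t \<and> t < hi \<and> energy W n \<gamma> \<kappa> (x(i:=t)) < energy W n \<gamma> \<kappa> x"
proof -
  have D: "((\<lambda>t. energy W n \<gamma> \<kappa> (x(i:=t))) has_real_derivative w + coupling_force n \<gamma> \<kappa> x i) (at (x i))"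
    using energy_partial_derivative[OF sym i W, of \<kappa> x] by simp
  have x: "x(i := x i) = x" by simp
  show "\<exists>t. lo < t \<and> t < hi \<and> energy W n \<gamma> \<kappa> (x(i:=t)) < energy W n \<gamma> \<kappa> x"
    if "x i = lo" "w + coupling_force n \<gamma> \<kappa> x i < 0"
    using DERIV_neg_imp_decreasing_right[OF D that(2), of hi] that(1) x \<open>lo < hi\<close> by metis
  show "\<exists>t. lo < t \<and> t < hi \<and> energy W n \<gamma> \<kappa> (x(i:=t)) < energy W n \<gamma> \<kappa> x"
    if "x i = hi" "w + coupling_force n \<gamma> \<kappa> x i > 0"
    using DERIV_pos_imp_decreasing_left[OF D that(2), of lo] that(1) x \<open>lo < hi\<close> by metis
qed

section \<open>The potential\<close>

lemma sin_add_nat_pi: "sin (x + real n * pi) = (-1) ^ n * sin x"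
  by (simp add: sin_add)

lemma cos_add_nat_pi: "cos (x + real n * pi) = (-1) ^ n * cos x"
  by (simp add: cos_add)

lemma sin_add_nat_pi_squared: "(sin (x + real n * pi))\<^sup>2 = (sin x)\<^sup>2"
  by (simp add: sin_add_nat_pi power_mult_distrib flip: power_mult)

lemma sin_mult_cos_pos:
  fixes j :: nat
  assumes "real j < y" "y < real j + 1" "real j - 1/2 < z" "z < real j + 1/2"
  shows "sin (pi * y) * cos (pi * z) > 0"
proof -
  have "sin (pi * y) = (-1) ^ j * sin (pi * (y - j))"
    using sin_add_nat_pi[of "pi * (y - j)" j] by (simp add: algebra_simps)
  moreover have "cos (pi * z) = (-1) ^ j * cos (pi * (z - j))"
    using cos_add_nat_pi[of "pi * (z - j)" j] by (simp add: algebra_simps)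
  moreover have "sin (pi * (y - j)) > 0"
    by (rule sin_gt_zero) (use assms in auto)
  moreover have "- (pi/2) < pi * (z - j)" "pi * (z - j) < pi/2"
    using assms mult_strict_left_mono[of "-1/2" "z - j" pi]
      mult_strict_left_mono[of "z - j" "1/2" pi] by auto
  then have "cos (pi * (z - j)) > 0"
    by (rule cos_gt_zero_pi)
  ultimately show ?thesis
    by (simp add: mult_ac flip: power_mult_distrib)
qed

definition pot_alpha :: "nat \<Rightarrow> real" where
  "pot_alpha s = 1 / (1000 * (real s + 2)\<^sup>2)"

definition pot_eta :: "nat \<Rightarrow> real" where
  "pot_eta s = pi * sin (2 * pi * pot_alpha s)"

definition pot_x0 :: "nat \<Rightarrow> real" where
  "pot_x0 s = real s + 1/2 + pot_alpha s"

definition pot_K :: "nat \<Rightarrow> real" where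
  "pot_K s = 2 * ((cos (pi * pot_alpha s))\<^sup>2 + pot_eta s * pot_x0 s)"

definition pot_m :: "nat \<Rightarrow> real" where
  "pot_m s = pot_x0 s + 1"

definition d2_core :: "nat \<Rightarrow> real \<Rightarrow> real" where
  "d2_core s u = - pi * sin (2 * pi * u) - pot_eta s"

definition d1_core :: "nat \<Rightarrow> real \<Rightarrow> real" where
  "d1_core s u = - (sin (pi * u))\<^sup>2 - pot_eta s * u"

definition d1_outer :: "nat \<Rightarrow> real \<Rightarrow> real" where
  "d1_outer s u = - pot_K s / 2 + pot_K s / 2 * (u - pot_x0 s)\<^sup>2"

definition pot_d2 :: "nat \<Rightarrow> real \<Rightarrow> real" where
  "pot_d2 s x = d2_core s (min \<bar>x\<bar> (pot_x0 s)) + pot_K s * max 0 (\<bar>x\<bar> - pot_x0 s)"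

definition pot_d1 :: "nat \<Rightarrow> real \<Rightarrow> real" where
  "pot_d1 s = primitive (pot_d2 s)"

definition pot :: "nat \<Rightarrow> real \<Rightarrow> real" where
  "pot s = primitive (pot_d1 s)"

lemma pot_alpha_pos: "0 < pot_alpha s"
  unfolding pot_alpha_def by simp

lemma pot_alpha_le: "pot_alpha s \<le> 1 / 4000"
proof -
  have "(2::real)\<^sup>2 \<le> (real s + 2)\<^sup>2" by (rule power_mono) auto
  then show ?thesis unfolding pot_alpha_def by (simp add: field_simps)
qed

lemma pot_eta_pos: "0 < pot_eta s"
proof -
  have "0 < sin (2 * pi * pot_alpha s)"
    by (rule sin_gt_zero) (use pot_alpha_pos[of s] pot_alpha_le[of s] pi_gt3 in auto)
  then show ?thesis unfolding pot_eta_def by simp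
qed

lemma pot_eta_le: "pot_eta s \<le> 32 * pot_alpha s"
proof -
  have "sin (2 * pi * pot_alpha s) \<le> 2 * pi * pot_alpha s"
    by (rule sin_x_le_x) (use pot_alpha_pos[of s] in auto)
  then have "pot_eta s \<le> 2 * pi\<^sup>2 * pot_alpha s"
    unfolding pot_eta_def using pi_gt3 by (simp add: power2_eq_square)
  moreover have "pi\<^sup>2 \<le> 4\<^sup>2" by (rule power_mono) (use pi_less_4 in auto)
  then have "2 * pi\<^sup>2 * pot_alpha s \<le> 32 * pot_alpha s"
    using pot_alpha_pos[of s] by (intro mult_right_mono) auto
  ultimately show ?thesis by linarith
qed

lemma pot_x0_pos: "0 < pot_x0 s"
  unfolding pot_x0_def using pot_alpha_pos[of s] by simp

lemma pot_m_eq: "pot_m s = real s + 3/2 + pot_alpha s"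
  unfolding pot_m_def pot_x0_def by simp

lemma sin_pi_alpha_squared_le: "(sin (pi * pot_alpha s))\<^sup>2 \<le> 16 * (pot_alpha s)\<^sup>2"
proof -
  have "\<bar>sin (pi * pot_alpha s)\<bar> \<le> \<bar>pi * pot_alpha s\<bar>" by (rule abs_sin_x_le_abs_x)
  also have "\<dots> \<le> 4 * pot_alpha s"
    using pot_alpha_pos[of s] pi_less_4 by (simp add: mult_right_mono)
  finally have "\<bar>sin (pi * pot_alpha s)\<bar>\<^sup>2 \<le> (4 * pot_alpha s)\<^sup>2" by (rule power_mono) simp
  then show ?thesis by (simp add: power_mult_distrib)
qed

lemma pot_K_ge_1: "1 \<le> pot_K s"
proof -
  have "(pot_alpha s)\<^sup>2 \<le> (1/4000)\<^sup>2"
    using pot_alpha_le[of s] pot_alpha_pos[of s] by (intro power_mono) auto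
  then have "(sin (pi * pot_alpha s))\<^sup>2 \<le> 1/2"
    using sin_pi_alpha_squared_le[of s] by (simp add: power_divide)
  then have "(cos (pi * pot_alpha s))\<^sup>2 \<ge> 1/2"
    using sin_cos_squared_add[of "pi * pot_alpha s"] by linarith
  moreover have "pot_eta s * pot_x0 s \<ge> 0"
    using pot_eta_pos[of s] pot_x0_pos[of s] by simp
  ultimately show ?thesis unfolding pot_K_def by simp
qed

lemma d2_core_x0: "d2_core s (pot_x0 s) = 0"
proof -
  have "sin (2 * pi * pot_x0 s) = sin ((pi + 2 * pi * pot_alpha s) + real (2 * s) * pi)"
    unfolding pot_x0_def by (simp add: algebra_simps)
  then show ?thesis unfolding d2_core_def pot_eta_def sin_add_nat_pi by simp
qed

lemma d1_core_x0: "d1_core s (pot_x0 s) = - pot_K s / 2"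
proof -
  have "(sin (pi * pot_x0 s))\<^sup>2 = (sin (pi/2 + pi * pot_alpha s + real s * pi))\<^sup>2"
    unfolding pot_x0_def by (simp add: algebra_simps)
  also have "\<dots> = (cos (pi * pot_alpha s))\<^sup>2"
    unfolding sin_add_nat_pi_squared by (simp add: sin_add)
  finally show ?thesis unfolding d1_core_def pot_K_def by simp
qed

lemma d2_core_eq_sin_mult_cos:
  "d2_core s u = - 2 * pi * (sin (pi * (u + pot_alpha s)) * cos (pi * (u - pot_alpha s)))"
proof -
  have "(2*pi*u + 2*pi*pot_alpha s) / 2 = pi * (u + pot_alpha s)"
    "(2*pi*u - 2*pi*pot_alpha s) / 2 = pi * (u - pot_alpha s)"
    by (simp_all add: field_simps)
  then have "sin (2*pi*u) + sin (2*pi*pot_alpha s)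
      = 2 * sin (pi * (u + pot_alpha s)) * cos (pi * (u - pot_alpha s))"
    using sin_plus_sin[of "2*pi*u" "2*pi*pot_alpha s"] by simp
  then have "pi * (sin (2*pi*u) + sin (2*pi*pot_alpha s))
      = pi * (2 * sin (pi * (u + pot_alpha s)) * cos (pi * (u - pot_alpha s)))"
    by simp
  then show ?thesis unfolding d2_core_def pot_eta_def by (simp add: algebra_simps)
qed

lemma d2_core_neg:
  fixes j :: nat
  assumes "real j - pot_alpha s < u" "u < real j + 1/2 + pot_alpha s"
  shows "d2_core s u < 0"
proof -
  have "sin (pi * (u + pot_alpha s)) * cos (pi * (u - pot_alpha s)) > 0"
    by (rule sin_mult_cos_pos[of j]) (use assms pot_alpha_pos[of s] pot_alpha_le[of s] in auto)
  then show ?thesis unfolding d2_core_eq_sin_mult_cos by (simp add: mult_pos_pos)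
qed

lemma d2_core_pos:
  fixes j :: nat
  assumes "real j + 1/2 + pot_alpha s < u" "u < real j + 1 - pot_alpha s"
  shows "d2_core s u > 0"
proof -
  have "sin (pi * (u + pot_alpha s)) * cos (pi * (u - pot_alpha s - 1)) > 0"
    by (rule sin_mult_cos_pos[of j]) (use assms pot_alpha_pos[of s] pot_alpha_le[of s] in auto)
  moreover have "cos (pi * (u - pot_alpha s - 1)) = - cos (pi * (u - pot_alpha s))"
    by (simp add: right_diff_distrib)
  ultimately show ?thesis unfolding d2_core_eq_sin_mult_cos by (simp add: mult_pos_neg)
qed

lemma d1_core_deriv: "(d1_core s has_real_derivative d2_core s u) (at u)"
proof -
  have "(d1_core s has_real_derivative - (2 * sin (pi * u) * (cos (pi * u) * pi)) - pot_eta s) (at u)"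
    unfolding d1_core_def by (auto intro!: derivative_eq_intros)
  then show ?thesis
    unfolding d2_core_def using sin_double[of "pi * u"] by (simp add: algebra_simps)
qed

lemma d1_outer_deriv: "(d1_outer s has_real_derivative pot_K s * (u - pot_x0 s)) (at u)"
  unfolding d1_outer_def by (auto intro!: derivative_eq_intros)

lemma pot_d2_core: "\<bar>x\<bar> \<le> pot_x0 s \<Longrightarrow> pot_d2 s x = d2_core s \<bar>x\<bar>"
  unfolding pot_d2_def by simp

lemma pot_d2_outer: "pot_x0 s \<le> \<bar>x\<bar> \<Longrightarrow> pot_d2 s x = pot_K s * (\<bar>x\<bar> - pot_x0 s)"
  unfolding pot_d2_def using d2_core_x0[of s] by simp

lemma continuous_on_pot_d2: "continuous_on UNIV (pot_d2 s)"
  unfolding pot_d2_def d2_core_def by (intro continuous_intros)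

lemma pot_d2_minus: "pot_d2 s (- x) = pot_d2 s x"
  unfolding pot_d2_def by simp

lemma pot_d1_deriv: "(pot_d1 s has_real_derivative pot_d2 s x) (at x)"
  unfolding pot_d1_def by (rule has_real_derivative_primitive[OF continuous_on_pot_d2])

lemma continuous_on_pot_d1: "continuous_on UNIV (pot_d1 s)"
  unfolding pot_d1_def by (rule continuous_on_primitive[OF continuous_on_pot_d2])

lemma pot_d1_minus: "pot_d1 s (- x) = - pot_d1 s x"
  unfolding pot_d1_def by (rule primitive_odd_if_even[OF continuous_on_pot_d2 pot_d2_minus])

lemma pot_deriv: "(pot s has_real_derivative pot_d1 s x) (at x)"
  unfolding pot_def by (rule has_real_derivative_primitive[OF continuous_on_pot_d1])

lemma continuous_on_pot: "continuous_on UNIV (pot s)"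
  unfolding pot_def by (rule continuous_on_primitive[OF continuous_on_pot_d1])

lemma pot_minus: "pot s (- x) = pot s x"
  unfolding pot_def by (rule primitive_even_if_odd[OF continuous_on_pot_d1 pot_d1_minus])

lemma deriv_pot: "deriv (pot s) = pot_d1 s"
  unfolding pot_def by (rule deriv_primitive[OF continuous_on_pot_d1])

lemma deriv_pot_d1: "deriv (pot_d1 s) = pot_d2 s"
  unfolding pot_d1_def by (rule deriv_primitive[OF continuous_on_pot_d2])

lemma pot_d1_core:
  assumes "0 \<le> u" "u \<le> pot_x0 s"
  shows "pot_d1 s u = d1_core s u"
proof -
  have "pot_d1 s u = pot_d1 s 0 + (d1_core s u - d1_core s 0)"
    unfolding pot_d1_def
  proof (rule primitive_eq_antiderivative[OF continuous_on_pot_d2 assms(1)])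
    fix x assume "x \<in> {0..u}"
    then show "(d1_core s has_real_derivative pot_d2 s x) (at x)"
      using d1_core_deriv[of s x] pot_d2_core[of x s] assms by simp
  qed
  then show ?thesis
    unfolding pot_d1_def primitive_0[OF continuous_on_pot_d2] by (simp add: d1_core_def)
qed

lemma pot_d1_outer:
  assumes "pot_x0 s \<le> u"
  shows "pot_d1 s u = d1_outer s u"
proof -
  have "pot_d1 s u = pot_d1 s (pot_x0 s) + (d1_outer s u - d1_outer s (pot_x0 s))"
    unfolding pot_d1_def
  proof (rule primitive_eq_antiderivative[OF continuous_on_pot_d2 assms])
    fix x assume "x \<in> {pot_x0 s..u}"
    then show "(d1_outer s has_real_derivative pot_d2 s x) (at x)"
      using d1_outer_deriv[of s x] pot_d2_outer[of s x] pot_x0_pos[of s] by simp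
  qed
  then show ?thesis
    using pot_d1_core[of "pot_x0 s" s] pot_x0_pos[of s] d1_core_x0[of s]
    by (simp add: d1_outer_def)
qed

lemma pot_outer:
  assumes "pot_x0 s \<le> u"
  shows "pot s u = pot s (pot_x0 s) - pot_K s / 2 * (u - pot_x0 s) + pot_K s / 6 * (u - pot_x0 s) ^ 3"
proof -
  define G where "G v = - pot_K s / 2 * (v - pot_x0 s) + pot_K s / 6 * (v - pot_x0 s) ^ 3" for v
  have "pot s u = pot s (pot_x0 s) + (G u - G (pot_x0 s))"
    unfolding pot_def
  proof (rule primitive_eq_antiderivative[OF continuous_on_pot_d1 assms])
    fix x assume x: "x \<in> {pot_x0 s..u}"
    have "(G has_real_derivative - pot_K s / 2 * 1 + pot_K s / 6 * (3 * (x - pot_x0 s)\<^sup>2 * 1)) (at x)"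
      unfolding G_def by (rule derivative_eq_intros refl | simp add: power2_eq_square)+
    then have "(G has_real_derivative d1_outer s x) (at x)"
      unfolding d1_outer_def by simp
    then show "(G has_real_derivative pot_d1 s x) (at x)"
      using pot_d1_outer[of s x] x by simp
  qed
  then show ?thesis unfolding G_def by simp
qed

lemma pot_d1_m: "pot_d1 s (pot_m s) = 0"
  using pot_d1_outer[of s "pot_m s"] unfolding pot_m_def d1_outer_def by simp

lemma pot_d1_neg:
  assumes "0 < x" "x < pot_m s"
  shows "pot_d1 s x < 0"
proof (cases "x \<le> pot_x0 s")
  case True
  then have "pot_d1 s x = - (sin (pi * x))\<^sup>2 - pot_eta s * x"
    using pot_d1_core[of x s] assms unfolding d1_core_def by simp
  then show ?thesis
    using mult_pos_pos[OF pot_eta_pos[of s] assms(1)] zero_le_power2[of "sin (pi * x)"] by linarith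
next
  case False
  then have "(x - pot_x0 s)\<^sup>2 < 1"
    using assms by (simp add: pot_m_def abs_square_less_1)
  then have "pot_K s / 2 * (x - pot_x0 s)\<^sup>2 < pot_K s / 2"
    using pot_K_ge_1[of s] mult_strict_left_mono[of _ 1 "pot_K s / 2"] by simp
  then show ?thesis
    using pot_d1_outer[of s x] False unfolding d1_outer_def by simp
qed

lemma pot_d1_pos:
  assumes "pot_m s < x"
  shows "pot_d1 s x > 0"
proof -
  have "1 < (x - pot_x0 s)\<^sup>2"
    using assms by (simp add: pot_m_def abs_square_less_1 less_1_mult power2_eq_square)
  then have "pot_K s / 2 < pot_K s / 2 * (x - pot_x0 s)\<^sup>2"
    using pot_K_ge_1[of s] mult_strict_left_mono[of 1 _ "pot_K s / 2"] by simp
  then show ?thesis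
    using pot_d1_outer[of s x] assms unfolding d1_outer_def pot_m_def by simp
qed

lemma pot_growth_at_top: "filterlim (\<lambda>x. pot s x / x\<^sup>2) at_top at_top"
proof -
  define c where "c = pot s (pot_x0 s)"
  define K where "K = pot_K s"
  define a where "a = pot_x0 s"
  have "K > 0" using pot_K_ge_1[of s] unfolding K_def by simp
  then have "filterlim (\<lambda>x::real. (c - K/2 * (x - a) + K/6 * (x - a) ^ 3) / x\<^sup>2) at_top at_top"
    by real_asymp
  moreover have "\<forall>\<^sub>F x in at_top. (c - K/2 * (x - a) + K/6 * (x - a) ^ 3) / x\<^sup>2 = pot s x / x\<^sup>2"
    using eventually_ge_at_top[of a]
  proof eventually_elim
    case (elim x)
    then show ?case using pot_outer[of s x] unfolding c_def K_def a_def by simp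
  qed
  ultimately show ?thesis by (rule filterlim_cong[OF refl refl, THEN iffD1, rotated])
qed

lemma pot_growth_at_bot: "filterlim (\<lambda>x. pot s x / x\<^sup>2) at_top at_bot"
  unfolding filterlim_at_bot_mirror using pot_growth_at_top[of s] by (simp add: pot_minus)

lemma well_potential_pot: "well_potential_at (pot s) (pot_m s)"
  unfolding well_potential_at_def C2_def deriv_pot deriv_pot_d1
proof (intro conjI allI impI)
  show "0 < pot_m s" unfolding pot_m_def using pot_x0_pos[of s] by simp
  fix x
  show "pot s differentiable at x" using pot_deriv real_differentiable_def by blast
  show "pot_d1 s differentiable at x" using pot_d1_deriv real_differentiable_def by blast
  show "x \<in> {- pot_m s<..<0} \<or> pot_m s < x \<Longrightarrow> 0 < pot_d1 s x"
    using pot_d1_pos[of s x] pot_d1_neg[of "-x" s] pot_d1_minus[of s x] by auto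
  show "x < - pot_m s \<or> x \<in> {0<..<pot_m s} \<Longrightarrow> pot_d1 s x < 0"
    using pot_d1_pos[of s "-x"] pot_d1_neg[of x s] pot_d1_minus[of s x] by auto
qed (simp_all add: continuous_on_pot_d2 pot_minus pot_d1_m pot_d1_minus
    pot_growth_at_top pot_growth_at_bot)

lemma not_inflection_point_if_sign_constant:
  assumes "a < x" "x < b"
    and "(\<forall>y\<in>{a<..<b}. deriv (deriv W) y < 0) \<or> (\<forall>y\<in>{a<..<b}. deriv (deriv W) y > 0)"
  shows "\<not> inflection_point W x"
proof
  assume "inflection_point W x"
  then obtain d where "d > 0" and
    sign_change: "((\<forall>y\<in>{x-d<..<x}. deriv (deriv W) y > 0) \<and> (\<forall>y\<in>{x<..<x+d}. deriv (deriv W) y < 0)) \<or>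
      ((\<forall>y\<in>{x-d<..<x}. deriv (deriv W) y < 0) \<and> (\<forall>y\<in>{x<..<x+d}. deriv (deriv W) y > 0))"
    unfolding inflection_point_def by blast
  define e where "e = min d (min (x - a) (b - x)) / 2"
  have "0 < e" "e < d" "e < x - a" "e < b - x"
    unfolding e_def using \<open>d > 0\<close> assms(1,2) by auto
  then have "x - e \<in> {x-d<..<x} \<inter> {a<..<b}" "x + e \<in> {x<..<x+d} \<inter> {a<..<b}"
    by auto
  then show False using assms(3) sign_change by fastforce
qed

lemma pot_d2_neg:
  fixes j :: nat
  assumes "j \<le> s" "real j - pot_alpha s < y" "y < real j + 1/2 + pot_alpha s" "0 \<le> y"
  shows "pot_d2 s y < 0"
proof -
  have "y \<le> pot_x0 s" using assms unfolding pot_x0_def by simp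
  then show ?thesis using pot_d2_core[of y s] d2_core_neg[OF assms(2,3)] assms(4) by simp
qed

lemma pot_d2_pos:
  fixes j :: nat
  assumes "j < s" "real j + 1/2 + pot_alpha s < y" "y < real j + 1 - pot_alpha s"
  shows "pot_d2 s y > 0"
proof -
  have "0 \<le> y" "y \<le> pot_x0 s"
    using assms pot_alpha_pos[of s] unfolding pot_x0_def by simp_all
  then show ?thesis using pot_d2_core[of y s] d2_core_pos[OF assms(2,3)] by simp
qed

lemma pot_d2_pos_outer: "pot_x0 s < y \<Longrightarrow> pot_d2 s y > 0"
  using pot_d2_outer[of s y] pot_K_ge_1[of s] pot_x0_pos[of s] by simp

definition infl_down :: "nat \<Rightarrow> real set" where
  "infl_down s = (\<lambda>k. real k - pot_alpha s) ` {1..s}"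

definition infl_up :: "nat \<Rightarrow> real set" where
  "infl_up s = (\<lambda>j. real j + 1/2 + pot_alpha s) ` {0..s}"

lemma inflection_point_infl_up:
  assumes "z \<in> infl_up s"
  shows "inflection_point (pot s) z"
proof -
  obtain j where j: "j \<le> s" "z = real j + 1/2 + pot_alpha s"
    using assms unfolding infl_up_def by auto
  have "pot_d2 s y > 0" if "y \<in> {z<..<z + 1/4}" for y
  proof (cases "j = s")
    case True
    then show ?thesis using that j pot_d2_pos_outer[of s y] unfolding pot_x0_def by auto
  next
    case False
    then show ?thesis
      using that j pot_d2_pos[of j s y] pot_alpha_le[of s] by auto
  qed
  moreover have "pot_d2 s y < 0" if "y \<in> {z - 1/4<..<z}" for y
    using that j pot_d2_neg[of j s y] pot_alpha_pos[of s] pot_alpha_le[of s] by auto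
  ultimately show ?thesis
    unfolding inflection_point_def deriv_pot deriv_pot_d1
    by (intro exI[of _ "1/4"]) auto
qed

lemma inflection_point_infl_down:
  assumes "z \<in> infl_down s"
  shows "inflection_point (pot s) z"
proof -
  obtain k where k: "1 \<le> k" "k \<le> s" "z = real k - pot_alpha s"
    using assms unfolding infl_down_def by auto
  have "pot_d2 s y > 0" if "y \<in> {z - 1/4<..<z}" for y
    using that k pot_d2_pos[of "k - 1" s y] pot_alpha_le[of s] by (auto simp: of_nat_diff)
  moreover have "pot_d2 s y < 0" if "y \<in> {z<..<z + 1/4}" for y
    using that k pot_d2_neg[of k s y] pot_alpha_pos[of s] pot_alpha_le[of s] by auto
  ultimately show ?thesis
    unfolding inflection_point_def deriv_pot deriv_pot_d1
    by (intro exI[of _ "1/4"]) auto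
qed

lemma pot_d2_sign_constant_near:
  assumes "0 < x" "x < pot_m s" "x \<notin> infl_down s" "x \<notin> infl_up s"
  obtains a b where "a < x" "x < b"
    "(\<forall>y\<in>{a<..<b}. pot_d2 s y < 0) \<or> (\<forall>y\<in>{a<..<b}. pot_d2 s y > 0)"
proof (cases "x > pot_x0 s")
  case True
  then show ?thesis using pot_d2_pos_outer[of s] that[of "pot_x0 s" "x + 1"] by auto
next
  case False
  have al: "0 < pot_alpha s" "pot_alpha s \<le> 1/4000"
    using pot_alpha_pos pot_alpha_le by auto
  define j where "j = nat \<lfloor>x + pot_alpha s\<rfloor>"
  have j: "real j \<le> x + pot_alpha s" "x + pot_alpha s < real j + 1"
    unfolding j_def using assms al by linarith+
  have "j \<le> s"
    using j False al unfolding pot_x0_def by linarith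
  consider "x = real j - pot_alpha s" | "real j - pot_alpha s < x" "x < real j + 1/2 + pot_alpha s"
    | "x = real j + 1/2 + pot_alpha s" | "real j + 1/2 + pot_alpha s < x" using j by linarith
  then show ?thesis
  proof cases
    case 1
    then have "1 \<le> j" using assms al by (cases j) auto
    then have "x \<in> infl_down s" unfolding infl_down_def using 1 \<open>j \<le> s\<close> by auto
    then show ?thesis using assms by simp
  next
    case 2
    show ?thesis
      by (rule that[of "max (real j - pot_alpha s) 0" "real j + 1/2 + pot_alpha s"])
        (use 2 assms pot_d2_neg[of j s] \<open>j \<le> s\<close> in auto)
  next
    case 3
    then have "x \<in> infl_up s" unfolding infl_up_def using \<open>j \<le> s\<close> by auto
    then show ?thesis using assms by simp
  next
    case 4
    then have "j < s" using False unfolding pot_x0_def by simp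
    show ?thesis
      by (rule that[of "real j + 1/2 + pot_alpha s" "real j + 1 - pot_alpha s"])
        (use 4 j pot_d2_pos[of j s] \<open>j < s\<close> in auto)
  qed
qed

lemma inflection_points_pot:
  "{x \<in> {0<..<pot_m s}. inflection_point (pot s) x} = infl_down s \<union> infl_up s"
proof
  show "{x \<in> {0<..<pot_m s}. inflection_point (pot s) x} \<subseteq> infl_down s \<union> infl_up s"
  proof clarify
    fix x assume x: "x \<in> {0<..<pot_m s}" "inflection_point (pot s) x" "x \<notin> infl_up s"
    show "x \<in> infl_down s"
    proof (rule ccontr)
      assume "x \<notin> infl_down s"
      with x obtain a b where "a < x" "x < b"
        "(\<forall>y\<in>{a<..<b}. pot_d2 s y < 0) \<or> (\<forall>y\<in>{a<..<b}. pot_d2 s y > 0)"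
        using pot_d2_sign_constant_near[of x s] by auto
      then have "\<not> inflection_point (pot s) x"
        by (intro not_inflection_point_if_sign_constant) (simp_all add: deriv_pot deriv_pot_d1)
      with x show False by simp
    qed
  qed
  have "infl_down s \<union> infl_up s \<subseteq> {0<..<pot_m s}"
    unfolding infl_down_def infl_up_def pot_m_eq
    using pot_alpha_pos[of s] pot_alpha_le[of s] by auto
  then show "infl_down s \<union> infl_up s \<subseteq> {x \<in> {0<..<pot_m s}. inflection_point (pot s) x}"
    using inflection_point_infl_down inflection_point_infl_up by auto
qed

lemma card_inflection_points_pot:
  "finite (infl_down s \<union> infl_up s) \<and> card (infl_down s \<union> infl_up s) = 2 * s + 1"
proof -
  have "infl_down s \<inter> infl_up s = {}"
  proof (rule ccontr)
    assume "infl_down s \<inter> infl_up s \<noteq> {}"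
    then obtain k j :: nat where "real k - pot_alpha s = real j + 1/2 + pot_alpha s"
      unfolding infl_down_def infl_up_def by auto
    then have "j < k" "k < j + 1" using pot_alpha_pos[of s] pot_alpha_le[of s] by linarith+
    then show False by simp
  qed
  moreover have "card (infl_down s) = s" "card (infl_up s) = s + 1"
    unfolding infl_down_def infl_up_def by (subst card_image; auto simp: inj_on_def)+
  moreover have "finite (infl_down s)" "finite (infl_up s)"
    unfolding infl_down_def infl_up_def by auto
  ultimately show ?thesis by (simp add: card_Un_disjoint)
qed

lemma pot_in_Wclass_s: "pot s \<in> Wclass_s (2 * s + 1)"
  unfolding Wclass_s_def
  using well_potential_pot[of s] inflection_points_pot[of s] card_inflection_points_pot[of s]
  by auto

section \<open>Local minima of the coupled energy of the potential\<close>

lemma graphsD: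
  assumes "(n, \<gamma>) \<in> graphs"
  shows "2 \<le> n" "\<forall>a\<in>{1..n}. \<forall>b\<in>{1..n}. \<gamma> a b = \<gamma> b a" "connected_weighted n \<gamma>"
  using assms unfolding graphs_def by auto

definition coupling_tau :: "nat \<Rightarrow> real" where
  "coupling_tau s = 1 / (32 * (real s + 2))"

definition kappa_choice :: "nat \<Rightarrow> nat \<Rightarrow> (nat \<Rightarrow> nat \<Rightarrow> real) \<Rightarrow> real" where
  "kappa_choice s n \<gamma> = coupling_tau s / max_weighted_degree n \<gamma>"

lemma coupling_tau_pos: "0 < coupling_tau s"
  unfolding coupling_tau_def by simp

lemma
  assumes "(n, \<gamma>) \<in> graphs"
  shows kappa_choice_pos: "0 < kappa_choice s n \<gamma>"
    and kappa_choice_mult_max_weighted_degree: "kappa_choice s n \<gamma> * max_weighted_degree n \<gamma> = coupling_tau s"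
  using max_weighted_degree_pos[OF graphsD(3,1)[OF assms]] coupling_tau_pos[of s]
  unfolding kappa_choice_def by simp_all

lemma abs_coupling_force_le_quarter:
  assumes g: "(n, \<gamma>) \<in> graphs" and i: "i \<in> {1..n}"
    and b: "\<forall>j\<in>{1..n}. \<bar>y j\<bar> \<le> pot_m s + 1/2"
  shows "\<bar>coupling_force n \<gamma> (kappa_choice s n \<gamma>) y i\<bar> \<le> 1/4"
proof -
  let ?k = "kappa_choice s n \<gamma>" and ?M = "pot_m s + 1/2"
  have "0 < ?k" by (rule kappa_choice_pos[OF g])
  have "\<bar>coupling_force n \<gamma> ?k y i\<bar> \<le> 4 * ?k * ?M * weighted_degree n \<gamma> i"
    by (rule abs_coupling_force_le[OF i b]) (use \<open>0 < ?k\<close> in simp)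
  also have "\<dots> = 4 * ?M * (?k * weighted_degree n \<gamma> i)"
    by (simp add: algebra_simps)
  also have "\<dots> \<le> 4 * ?M * (?k * max_weighted_degree n \<gamma>)"
    using weighted_degree_le_max[OF i] \<open>0 < ?k\<close> pot_x0_pos[of s]
    by (intro mult_left_mono) (auto simp: pot_m_def)
  also have "\<dots> = (real s + 2 + pot_alpha s) / (8 * (real s + 2))"
    unfolding kappa_choice_mult_max_weighted_degree[OF g] coupling_tau_def pot_m_eq
    by (simp add: field_simps)
  also have "\<dots> \<le> 1/4"
    using pot_alpha_le[of s] by (simp add: field_simps)
  finally show ?thesis .
qed

lemma pot_d1_m_minus_half: "pot_d1 s (pot_m s - 1/2) = - 3/8 * pot_K s"
  using pot_d1_outer[of s "pot_m s - 1/2"] unfolding pot_m_def d1_outer_def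
  by (simp add: power2_eq_square)

lemma pot_d1_m_plus_half: "pot_d1 s (pot_m s + 1/2) = 5/8 * pot_K s"
  using pot_d1_outer[of s "pot_m s + 1/2"] unfolding pot_m_def d1_outer_def
  by (simp add: power2_eq_square)

lemma energy_pot_decreases_near_well:
  assumes g: "(n, \<gamma>) \<in> graphs" and i: "i \<in> {1..n}"
    and b: "\<forall>j\<in>{1..n}. \<bar>x j\<bar> \<le> pot_m s + 1/2" and c: "c = 1 \<or> c = -1"
    and face: "x i = c * pot_m s - 1/2 \<or> x i = c * pot_m s + 1/2"
  shows "\<exists>t. c * pot_m s - 1/2 < t \<and> t < c * pot_m s + 1/2 \<and>
    energy (pot s) n \<gamma> (kappa_choice s n \<gamma>) (x(i:=t)) < energy (pot s) n \<gamma> (kappa_choice s n \<gamma>) x"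
proof -
  have force: "\<bar>coupling_force n \<gamma> (kappa_choice s n \<gamma>) x i\<bar> \<le> 1/4"
    by (rule abs_coupling_force_le_quarter[OF g i b])
  note descent = energy_decreases_inward[OF graphsD(2)[OF g] i pot_deriv[of s],
      where x = x and lo = "c * pot_m s - 1/2" and hi = "c * pot_m s + 1/2" and \<kappa> = "kappa_choice s n \<gamma>"]
  show ?thesis
    using face
  proof
    assume lo: "x i = c * pot_m s - 1/2"
    then have "pot_d1 s (x i) \<le> - 3/8"
      using c pot_d1_m_minus_half[of s] pot_d1_m_plus_half[of s] pot_d1_minus[of s "pot_m s + 1/2"]
        pot_K_ge_1[of s] by auto
    then show ?thesis using descent(1)[OF _ lo] force by simp
  next
    assume hi: "x i = c * pot_m s + 1/2"
    then have "pot_d1 s (x i) \<ge> 3/8"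
      using c pot_d1_m_minus_half[of s] pot_d1_m_plus_half[of s] pot_d1_minus[of s "pot_m s - 1/2"]
        pot_K_ge_1[of s] by auto
    then show ?thesis using descent(2)[OF _ hi] force by simp
  qed
qed

lemma local_min_near_sign_pattern:
  assumes g: "(n, \<gamma>) \<in> graphs"
  obtains P where "is_local_min n (energy (pot s) n \<gamma> (kappa_choice s n \<gamma>)) P"
    "\<forall>i\<in>{1..n}. sign_pattern A i * pot_m s - 1/2 < P i \<and> P i < sign_pattern A i * pot_m s + 1/2"
proof -
  define lo where "lo i = sign_pattern A i * pot_m s - 1/2" for i
  define hi where "hi i = sign_pattern A i * pot_m s + 1/2" for i
  have bounds: "\<forall>j\<in>{1..n}. - (pot_m s + 1/2) \<le> lo j \<and> hi j \<le> pot_m s + 1/2"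
    unfolding lo_def hi_def sign_pattern_def using pot_m_eq[of s] pot_alpha_pos[of s] by auto
  have sign: "sign_pattern A i = 1 \<or> sign_pattern A i = -1" for i
    unfolding sign_pattern_def by auto
  obtain P where "is_local_min n (energy (pot s) n \<gamma> (kappa_choice s n \<gamma>)) P"
    "\<forall>i\<in>{1..n}. lo i < P i \<and> P i < hi i"
  proof (rule is_local_min_in_box)
    show "1 \<le> n" using graphsD(1)[OF g] by simp
    show "\<forall>i\<in>{1..n}. lo i < hi i" unfolding lo_def hi_def by auto
    show "continuous_on UNIV (energy (pot s) n \<gamma> (kappa_choice s n \<gamma>))"
      by (rule continuous_on_energy[OF continuous_on_pot])
  next
    fix x i assume "x \<in> coord_box n lo hi" "i \<in> {1..n}" "x i = lo i \<or> x i = hi i"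
    then show "\<exists>t. lo i < t \<and> t < hi i \<and>
      energy (pot s) n \<gamma> (kappa_choice s n \<gamma>) (x(i:=t)) < energy (pot s) n \<gamma> (kappa_choice s n \<gamma>) x"
      using energy_pot_decreases_near_well[OF g _ abs_le_of_coord_box[OF _ bounds] sign]
      unfolding lo_def hi_def by blast
  qed
  then show ?thesis using that unfolding lo_def hi_def by blast
qed

lemma pot_d1_half_integer_le:
  assumes "1 \<le> k" "k \<le> s"
  shows "pot_d1 s (real k - 1/2) \<le> -1"
proof -
  have "pot_d1 s (real k - 1/2) = d1_core s (real k - 1/2)"
    using assms pot_alpha_pos[of s] by (intro pot_d1_core) (auto simp: pot_x0_def)
  moreover have "(sin (pi * (real k - 1/2)))\<^sup>2 = (sin (- (pi/2) + real k * pi))\<^sup>2"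
    by (simp add: algebra_simps)
  moreover have "pot_eta s * (real k - 1/2) \<ge> 0" using pot_eta_pos[of s] assms by simp
  ultimately show ?thesis unfolding d1_core_def sin_add_nat_pi_squared by simp
qed

lemma pot_d1_trap_ge:
  assumes "1 \<le> k" "k \<le> s"
  shows "pot_d1 s (real k - pot_alpha s) \<ge> - (16 * (pot_alpha s)\<^sup>2 + 32 * pot_alpha s * real s)"
proof -
  have al: "0 < pot_alpha s" "pot_alpha s \<le> 1/4000" using pot_alpha_pos pot_alpha_le by auto
  have "pot_d1 s (real k - pot_alpha s) = d1_core s (real k - pot_alpha s)"
    using assms al by (intro pot_d1_core) (auto simp: pot_x0_def)
  moreover have "(sin (pi * (real k - pot_alpha s)))\<^sup>2 = (sin (- (pi * pot_alpha s) + real k * pi))\<^sup>2"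
    by (simp add: algebra_simps)
  moreover have "pot_eta s * (real k - pot_alpha s) \<le> 32 * pot_alpha s * real s"
  proof -
    have "pot_eta s * (real k - pot_alpha s) \<le> pot_eta s * real s"
      using assms pot_eta_pos[of s] al by (intro mult_left_mono) auto
    also have "\<dots> \<le> 32 * pot_alpha s * real s"
      using pot_eta_le[of s] by (intro mult_right_mono) auto
    finally show ?thesis .
  qed
  ultimately show ?thesis
    using sin_pi_alpha_squared_le[of s] unfolding d1_core_def sin_add_nat_pi_squared by simp
qed

lemma trap_slope_lt_coupling_tau: "16 * (pot_alpha s)\<^sup>2 + 32 * pot_alpha s * real s < 2 * coupling_tau s"
proof -
  define q where "q = real s + 2"
  have "q \<ge> 2" unfolding q_def by simp
  have "pot_alpha s = 1 / (1000 * q\<^sup>2)" unfolding pot_alpha_def q_def by simp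
  then have alq: "pot_alpha s * q = 1 / (1000 * q)"
    using \<open>q \<ge> 2\<close> by (simp add: power2_eq_square)
  have "16 * (pot_alpha s)\<^sup>2 \<le> pot_alpha s * q"
    using pot_alpha_pos[of s] pot_alpha_le[of s] \<open>q \<ge> 2\<close>
    by (simp add: power2_eq_square mult_right_mono)
  moreover have "32 * pot_alpha s * real s \<le> 32 * (pot_alpha s * q)"
    using pot_alpha_pos[of s] unfolding q_def by (simp add: algebra_simps)
  moreover have "2 * coupling_tau s = 1 / (16 * q)"
    unfolding coupling_tau_def q_def by (simp add: field_simps)
  moreover have "62.5 * (pot_alpha s * q) = 1 / (16 * q)"
    unfolding alq using \<open>q \<ge> 2\<close> by simp
  moreover have "pot_alpha s * q > 0" using pot_alpha_pos[of s] \<open>q \<ge> 2\<close> by simp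
  ultimately show ?thesis by linarith
qed

definition trap_sign :: "(nat \<Rightarrow> nat \<Rightarrow> real) \<Rightarrow> nat \<Rightarrow> nat \<Rightarrow> real" where
  "trap_sign \<gamma> v j = (if \<gamma> v j > 0 then -1 else 1)"

lemma coupling_force_at_trap:
  assumes g: "(n, \<gamma>) \<in> graphs" and v: "v = max_degree_vertex n \<gamma>"
    and "0 \<le> x v" "x v \<le> real s"
    and nb: "\<forall>j\<in>{1..n} - {v}. trap_sign \<gamma> v j * pot_m s - 1/2 \<le> x j \<and> x j \<le> trap_sign \<gamma> v j * pot_m s + 1/2"
  shows "2 * coupling_tau s \<le> coupling_force n \<gamma> (kappa_choice s n \<gamma>) x v"
proof -
  have "1 \<le> n" using graphsD(1)[OF g] by simp
  note vertex = max_degree_vertex[OF this, of \<gamma>, folded v]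
  define L where "L = pot_m s - x v - 1/2"
  have "1 \<le> L" unfolding L_def pot_m_eq using assms(4) pot_alpha_pos[of s] by simp
  have "L * max_weighted_degree n \<gamma> \<le> (\<Sum>j=1..n. \<gamma> v j * (x v - x j))"
    unfolding vertex(2)[symmetric]
  proof (rule coupling_sum_ge_weighted_degree[OF vertex(1)])
    fix j assume "j \<in> {1..n} - {v}"
    with nb have "trap_sign \<gamma> v j * pot_m s - 1/2 \<le> x j \<and> x j \<le> trap_sign \<gamma> v j * pot_m s + 1/2"
      by blast
    then show "(\<gamma> v j > 0 \<longrightarrow> L \<le> x v - x j) \<and> (\<gamma> v j \<le> 0 \<longrightarrow> x v - x j \<le> - L)"
      using assms(3) unfolding trap_sign_def L_def by auto
  qed (use \<open>1 \<le> L\<close> in simp)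
  moreover have "max_weighted_degree n \<gamma> \<le> L * max_weighted_degree n \<gamma>"
    using \<open>1 \<le> L\<close> max_weighted_degree_pos[OF graphsD(3,1)[OF g]] by simp
  ultimately have "2 * kappa_choice s n \<gamma> * max_weighted_degree n \<gamma>
      \<le> 2 * kappa_choice s n \<gamma> * (\<Sum>j=1..n. \<gamma> v j * (x v - x j))"
    using kappa_choice_pos[OF g, of s] by (intro mult_left_mono) auto
  then show ?thesis
    unfolding coupling_force_def using kappa_choice_mult_max_weighted_degree[OF g, of s] by simp
qed

lemma energy_pot_decreases_at_trap:
  assumes g: "(n, \<gamma>) \<in> graphs" and k: "1 \<le> k" "k \<le> s" and v: "v = max_degree_vertex n \<gamma>"
    and nb: "\<forall>j\<in>{1..n} - {v}. trap_sign \<gamma> v j * pot_m s - 1/2 \<le> x j \<and> x j \<le> trap_sign \<gamma> v j * pot_m s + 1/2"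
    and b: "\<forall>j\<in>{1..n}. \<bar>x j\<bar> \<le> pot_m s + 1/2"
    and face: "x v = real k - 1/2 \<or> x v = real k - pot_alpha s"
  shows "\<exists>t. real k - 1/2 < t \<and> t < real k - pot_alpha s \<and>
    energy (pot s) n \<gamma> (kappa_choice s n \<gamma>) (x(v:=t)) < energy (pot s) n \<gamma> (kappa_choice s n \<gamma>) x"
proof -
  have al: "0 < pot_alpha s" "pot_alpha s \<le> 1/4000" using pot_alpha_pos pot_alpha_le by auto
  have "v \<in> {1..n}" using max_degree_vertex(1) graphsD(1)[OF g] unfolding v by simp
  note descent = energy_decreases_inward[OF graphsD(2)[OF g] \<open>v \<in> {1..n}\<close> pot_deriv[of s],
      where x = x and lo = "real k - 1/2" and hi = "real k - pot_alpha s" and \<kappa> = "kappa_choice s n \<gamma>"]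
  show ?thesis
    using face
  proof
    assume lo: "x v = real k - 1/2"
    have "\<bar>coupling_force n \<gamma> (kappa_choice s n \<gamma>) x v\<bar> \<le> 1/4"
      by (rule abs_coupling_force_le_quarter[OF g \<open>v \<in> {1..n}\<close> b])
    moreover have "pot_d1 s (x v) \<le> -1" using pot_d1_half_integer_le[OF k] lo by simp
    ultimately show ?thesis using descent(1)[OF _ lo] al by simp
  next
    assume hi: "x v = real k - pot_alpha s"
    have "2 * coupling_tau s \<le> coupling_force n \<gamma> (kappa_choice s n \<gamma>) x v"
      by (rule coupling_force_at_trap[OF g v _ _ nb]) (use hi k al in auto)
    then have "pot_d1 s (x v) + coupling_force n \<gamma> (kappa_choice s n \<gamma>) x v > 0"
      using pot_d1_trap_ge[OF k] trap_slope_lt_coupling_tau[of s] hi by simp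
    then show ?thesis using descent(2)[OF _ hi] al by simp
  qed
qed

lemma local_min_in_trap:
  assumes g: "(n, \<gamma>) \<in> graphs" and k: "1 \<le> k" "k \<le> s"
  obtains Q where "is_local_min n (energy (pot s) n \<gamma> (kappa_choice s n \<gamma>)) Q"
    "real k - 1/2 < Q (max_degree_vertex n \<gamma>)" "Q (max_degree_vertex n \<gamma>) < real k - pot_alpha s"
proof -
  define v where "v = max_degree_vertex n \<gamma>"
  have "1 \<le> n" using graphsD(1)[OF g] by simp
  let ?E = "energy (pot s) n \<gamma> (kappa_choice s n \<gamma>)"
  define lo where "lo j = (if j = v then real k - 1/2 else trap_sign \<gamma> v j * pot_m s - 1/2)" for j
  define hi where "hi j = (if j = v then real k - pot_alpha s else trap_sign \<gamma> v j * pot_m s + 1/2)" for j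
  have al: "0 < pot_alpha s" "pot_alpha s \<le> 1/4000" using pot_alpha_pos pot_alpha_le by auto
  have bounds: "\<forall>j\<in>{1..n}. - (pot_m s + 1/2) \<le> lo j \<and> hi j \<le> pot_m s + 1/2"
    unfolding lo_def hi_def trap_sign_def using k al pot_m_eq[of s] by auto
  have lohi: "\<forall>i\<in>{1..n}. lo i < hi i" unfolding lo_def hi_def using al by auto
  have faces: "\<exists>t. lo i < t \<and> t < hi i \<and> ?E (x(i:=t)) < ?E x"
    if x: "x \<in> coord_box n lo hi" and i: "i \<in> {1..n}" and face: "x i = lo i \<or> x i = hi i" for x i
  proof (cases "i = v")
    case False
    have "trap_sign \<gamma> v i = 1 \<or> trap_sign \<gamma> v i = -1" unfolding trap_sign_def by auto
    from energy_pot_decreases_near_well[OF g i abs_le_of_coord_box[OF x bounds] this]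
    show ?thesis using face False unfolding lo_def hi_def by simp
  next
    case True
    have "\<forall>j\<in>{1..n} - {v}. trap_sign \<gamma> v j * pot_m s - 1/2 \<le> x j \<and> x j \<le> trap_sign \<gamma> v j * pot_m s + 1/2"
      using x unfolding coord_box_def lo_def hi_def by auto
    from energy_pot_decreases_at_trap[OF g k v_def this abs_le_of_coord_box[OF x bounds]]
    show ?thesis using face True unfolding lo_def hi_def by simp
  qed
  obtain P where P: "is_local_min n ?E P" "\<forall>i\<in>{1..n}. lo i < P i \<and> P i < hi i"
    by (rule is_local_min_in_box[OF \<open>1 \<le> n\<close> lohi continuous_on_energy[OF continuous_on_pot] faces])
  have "v \<in> {1..n}" using max_degree_vertex(1)[OF \<open>1 \<le> n\<close>] unfolding v_def .
  with P(2) have "lo v < P v" "P v < hi v" by auto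
  then show ?thesis using that[OF P(1)] unfolding lo_def hi_def v_def by simp
qed

lemma local_min_family_sign_patterns:
  assumes g: "(n, \<gamma>) \<in> graphs"
  obtains P where "\<And>A. is_local_min n (energy (pot s) n \<gamma> (kappa_choice s n \<gamma>)) (P A)"
    "inj_on P (Pow {1..n})" "\<And>A i. i \<in> {1..n} \<Longrightarrow> pot_m s - 1/2 < \<bar>P A i\<bar>"
proof -
  let ?E = "energy (pot s) n \<gamma> (kappa_choice s n \<gamma>)"
  have "\<forall>A. \<exists>P. is_local_min n ?E P \<and>
      (\<forall>i\<in>{1..n}. sign_pattern A i * pot_m s - 1/2 < P i \<and> P i < sign_pattern A i * pot_m s + 1/2)"
    using local_min_near_sign_pattern[OF g] by metis
  then obtain P where P: "\<And>A. is_local_min n ?E (P A)"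
    "\<And>A i. i \<in> {1..n} \<Longrightarrow> sign_pattern A i * pot_m s - 1/2 < P A i \<and> P A i < sign_pattern A i * pot_m s + 1/2"
    by metis
  have m: "1 < pot_m s" unfolding pot_m_eq using pot_alpha_pos[of s] by simp
  have sign: "i \<in> A \<longleftrightarrow> 0 < P A i" and far: "pot_m s - 1/2 < \<bar>P A i\<bar>" if "i \<in> {1..n}" for A i
    using P(2)[OF that, of A] m unfolding sign_pattern_def by (cases "i \<in> A"; simp)+
  have "inj_on P (Pow {1..n})"
  proof (rule inj_onI)
    fix A B assume AB: "A \<in> Pow {1..n}" "B \<in> Pow {1..n}" "P A = P B"
    show "A = B"
    proof (rule set_eqI)
      fix i show "i \<in> A \<longleftrightarrow> i \<in> B"
        using sign[of i A] sign[of i B] AB by (cases "i \<in> {1..n}") auto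
    qed
  qed
  then show ?thesis using that P(1) far by blast
qed

lemma local_min_family_traps:
  assumes g: "(n, \<gamma>) \<in> graphs"
  obtains Q where "\<And>k. k \<in> {1..s} \<Longrightarrow> is_local_min n (energy (pot s) n \<gamma> (kappa_choice s n \<gamma>)) (Q k)"
    "inj_on Q {1..s}"
    "\<And>k. k \<in> {1..s} \<Longrightarrow> 0 < Q k (max_degree_vertex n \<gamma>) \<and> Q k (max_degree_vertex n \<gamma>) < pot_m s - 1/2"
proof -
  let ?E = "energy (pot s) n \<gamma> (kappa_choice s n \<gamma>)"
  let ?v = "max_degree_vertex n \<gamma>"
  have "\<forall>k. \<exists>Q. k \<in> {1..s} \<longrightarrow> is_local_min n ?E Q \<and> real k - 1/2 < Q ?v \<and> Q ?v < real k - pot_alpha s"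
    using local_min_in_trap[OF g] by (metis atLeastAtMost_iff)
  then obtain Q where Q: "\<And>k. k \<in> {1..s} \<Longrightarrow> is_local_min n ?E (Q k)"
    "\<And>k. k \<in> {1..s} \<Longrightarrow> real k - 1/2 < Q k ?v \<and> Q k ?v < real k - pot_alpha s"
    by metis
  have al: "0 < pot_alpha s" "pot_alpha s \<le> 1/4000" using pot_alpha_pos pot_alpha_le by auto
  have "inj_on Q {1..s}"
  proof (rule inj_onI)
    fix k l assume kl: "k \<in> {1..s}" "l \<in> {1..s}" "Q k = Q l"
    have "real k < real l + 1" "real l < real k + 1"
      using Q(2)[OF kl(1)] Q(2)[OF kl(2)] kl(3) al by auto
    then show "k = l" by linarith
  qed
  moreover have "0 < Q k ?v \<and> Q k ?v < pot_m s - 1/2" if "k \<in> {1..s}" for k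
    using Q(2)[OF that] that al unfolding pot_m_eq by auto
  ultimately show ?thesis using that Q(1) by blast
qed

lemma card_local_min_pot_coupled:
  assumes g: "(n, \<gamma>) \<in> graphs"
    and fin: "finite {x. is_local_min n (energy (pot s) n \<gamma> (kappa_choice s n \<gamma>)) x}"
  shows "2 ^ n + 2 * s \<le> card {x. is_local_min n (energy (pot s) n \<gamma> (kappa_choice s n \<gamma>)) x}"
proof -
  let ?L = "{x. is_local_min n (energy (pot s) n \<gamma> (kappa_choice s n \<gamma>)) x}"
  let ?v = "max_degree_vertex n \<gamma>"
  have v: "?v \<in> {1..n}" using max_degree_vertex(1) graphsD(1)[OF g] by simp
  obtain P where P: "\<And>A. P A \<in> ?L" "inj_on P (Pow {1..n})" "\<And>A. pot_m s - 1/2 < \<bar>P A ?v\<bar>"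
    using local_min_family_sign_patterns[OF g] v by (metis mem_Collect_eq)
  obtain Q where Q: "\<And>k. k \<in> {1..s} \<Longrightarrow> Q k \<in> ?L" "inj_on Q {1..s}"
    "\<And>k. k \<in> {1..s} \<Longrightarrow> 0 < Q k ?v \<and> Q k ?v < pot_m s - 1/2"
    using local_min_family_traps[OF g] by (metis mem_Collect_eq)
  define neg :: "(nat \<Rightarrow> real) \<Rightarrow> nat \<Rightarrow> real" where "neg x = (\<lambda>i. - x i)" for x
  define S1 where "S1 = P ` Pow {1..n}"
  define S2 where "S2 = Q ` {1..s}"
  define S3 where "S3 = neg ` S2"
  have S1_v: "pot_m s - 1/2 < \<bar>x ?v\<bar>" if "x \<in> S1" for x
    using that P(3) unfolding S1_def by auto
  have S2_v: "0 < x ?v \<and> x ?v < pot_m s - 1/2" if "x \<in> S2" for x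
    using that Q(3) unfolding S2_def by auto
  have S3_v: "- (pot_m s - 1/2) < x ?v \<and> x ?v < 0" if "x \<in> S3" for x
    using that S2_v unfolding S3_def neg_def by force
  have "card S1 = 2 ^ n" "card S2 = s"
    unfolding S1_def S2_def using P(2) Q(2) by (simp_all add: card_image card_Pow)
  moreover have "card S3 = card S2"
    unfolding S3_def by (rule card_image) (auto intro!: inj_onI simp: neg_def fun_eq_iff)
  moreover have "S1 \<inter> S2 = {}" "(S1 \<union> S2) \<inter> S3 = {}"
    using S1_v S2_v S3_v by fastforce+
  moreover have "finite S1" "finite S2" "finite S3"
    unfolding S1_def S2_def S3_def by auto
  ultimately have "card (S1 \<union> S2 \<union> S3) = 2 ^ n + s + s"
    by (simp add: card_Un_disjoint)
  moreover have "S1 \<union> S2 \<union> S3 \<subseteq> ?L"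
    unfolding S1_def S2_def S3_def neg_def
    using P(1) Q(1) is_local_min_energy_minus[where W = "pot s", OF pot_minus] by auto
  then have "card (S1 \<union> S2 \<union> S3) \<le> card ?L"
    by (rule card_mono[OF fin])
  ultimately show ?thesis by simp
qed

lemma C_graph_pot_ge:
  assumes g: "(n, \<gamma>) \<in> graphs"
  shows "ereal (real (2 * s)) \<le> C_graph n \<gamma> (pot s)"
proof -
  let ?L = "{x. is_local_min n (energy (pot s) n \<gamma> (kappa_choice s n \<gamma>)) x}"
  let ?L_free = "{x. is_local_min n (energy (pot s) n \<gamma> 0) x}"
  note uncoupled = card_local_min_uncoupled[OF well_potential_pot[of s], where n = n and \<gamma> = \<gamma>]
  have "ereal (real (2 * s)) \<le> num_min (pot s) n \<gamma> (kappa_choice s n \<gamma>) - num_min (pot s) n \<gamma> 0"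
  proof (cases "finite ?L")
    case True
    then have "real (2 * s) \<le> real (card ?L) - real (card ?L_free)"
      using card_local_min_pot_coupled[OF g True] uncoupled(2) by linarith
    then show ?thesis unfolding num_min_def Let_def using True uncoupled(1) by simp
  next
    case False
    then show ?thesis unfolding num_min_def Let_def using uncoupled(1) by simp
  qed
  also have "\<dots> \<le> C_graph n \<gamma> (pot s)"
    unfolding C_graph_def by (rule SUP_upper) (use kappa_choice_pos[OF g, of s] in simp)
  finally show ?thesis .
qed

theorem mainTheorem4:
  shows "\<forall>s::nat. \<exists>W. W \<in> Wclass_s (2 * s + 1) \<and> C_pot W \<ge> ereal (real (2 * s))"
proof
  fix s :: nat
  have "C_pot (pot s) \<ge> ereal (real (2 * s))"
    unfolding C_pot_def by (rule INF_greatest) (use C_graph_pot_ge in auto)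
  then show "\<exists>W. W \<in> Wclass_s (2 * s + 1) \<and> C_pot W \<ge> ereal (real (2 * s))"
    using pot_in_Wclass_s[of s] by blast
qed

end
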